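(* Let $\mathcal{A}\in\mathbb{R}^{n\times n\times n}$ and $\mathcal{E}\in\mathbb{R}^{n\times n\times n}$ be such that $\mathcal{A}$ and $\tilde{\mathcal{A}}=\mathcal{A}+\mathcal{E}$ are piezoelectric-type tensors. Then $$\sqrt{(\lambda_{C\max}(\mathcal{A}))^2+\lambda_{Z\min}(\mathcal{S}_{\tilde{\mathcal{A}}}-\mathcal{S}_{\mathcal{A}})}\ \le\ \lambda_{C\max}(\tilde{\mathcal{A}})\ \le\ \sqrt{(\lambda_{C\max}(\mathcal{A}))^2+\lambda_{Z\max}(\mathcal{S}_{\tilde{\mathcal{A}}}-\mathcal{S}_{\mathcal{A}})}.$$ (In particular both quantities under the square roots are nonnegative.)
   Context: A tensor $\mathcal{A}=(a_{ijk})\in\mathbb{R}^{n\times n\times n}$ is piezoelectric-type if $a_{ijk}=a_{ikj}$ for all $i,j,k$. For such $\mathcal{A}$, $\lambda_{C\max}(\mathcal{A})=\max\{\sum_{i,j,k}a_{ijk}x_iy_jy_k:\ \mathbf{x},\mathbf{y}\in\mathbb{R}^n,\ \mathbf{x}^T\mathbf{x}=\mathbf{y}^T\mathbf{y}=1\}$ is its largest $C$-eigenvalue (a $C$-eigenvalue being a real $\lambda$ with unit $\mathbf{x},\mathbf{y}$ satisfying $\sum_{j,k}a_{ijk}y_jy_k=\lambda x_i$ and $\sum_{j,k}a_{jki}x_jy_k=\lambda y_i$ for all $i$). The symmetric fourth-order tensor $\mathcal{S}_{\mathcal{A}}=(\bar b_{i_1i_2i_3i_4})$ is defined by $\bar b_{i_1i_2i_3i_4}=\frac13(b_{i_1i_2i_3i_4}+b_{i_1i_3i_2i_4}+b_{i_1i_4i_2i_3})$,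 where $b_{i_1i_2i_3i_4}=\sum_{i=1}^n a_{ii_1i_2}a_{ii_3i_4}$. For a symmetric fourth-order tensor $\mathcal{T}=(t_{i_1i_2i_3i_4})$, a $Z$-eigenvalue is a real $\lambda$ with some $\mathbf{x}\in\mathbb{R}^n$, $\mathbf{x}^T\mathbf{x}=1$, such that $\sum_{i_2,i_3,i_4}t_{ii_2i_3i_4}x_{i_2}x_{i_3}x_{i_4}=\lambda x_i$ for all $i$; $\lambda_{Z\max}(\mathcal{T})$ and $\lambda_{Z\min}(\mathcal{T})$ denote the largest and smallest $Z$-eigenvalues, which equal respectively the maximum and minimum of $\mathcal{T}\mathbf{x}^4=\sum t_{i_1i_2i_3i_4}x_{i_1}x_{i_2}x_{i_3}x_{i_4}$ over unit vectors $\mathbf{x}\in\mathbb{R}^n$. *)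

theory Defs
  imports "HOL-Analysis.Analysis"
begin

type_synonym 'n tensor3 = "'n \<Rightarrow> 'n \<Rightarrow> 'n \<Rightarrow> real"
type_synonym 'n tensor4 = "'n \<Rightarrow> 'n \<Rightarrow> 'n \<Rightarrow> 'n \<Rightarrow> real"

definition piezo_type :: "('n::finite) tensor3 \<Rightarrow> bool" where
  "piezo_type A \<longleftrightarrow> (\<forall>i j k. A i j k = A i k j)"

definition tadd3 :: "('n::finite) tensor3 \<Rightarrow> 'n tensor3 \<Rightarrow> 'n tensor3" where
  "tadd3 A E = (\<lambda>i j k. A i j k + E i j k)"

definition tsub4 :: "('n::finite) tensor4 \<Rightarrow> 'n tensor4 \<Rightarrow> 'n tensor4" where
  "tsub4 S T = (\<lambda>i1 i2 i3 i4. S i1 i2 i3 i4 - T i1 i2 i3 i4)"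

definition form3 :: "('n::finite) tensor3 \<Rightarrow> real^'n \<Rightarrow> real^'n \<Rightarrow> real" where
  "form3 A x y = (\<Sum>i\<in>UNIV. \<Sum>j\<in>UNIV. \<Sum>k\<in>UNIV. A i j k * x$i * y$j * y$k)"

text \<open>Largest C-eigenvalue, defined (as in the paper) as the maximum of A x y y over unit x, y.\<close>
definition lambda_Cmax :: "('n::finite) tensor3 \<Rightarrow> real" where
  "lambda_Cmax A = (GREATEST v. \<exists>x y. x \<bullet> x = 1 \<and> y \<bullet> y = 1 \<and> v = form3 A x y)"

definition Btensor :: "('n::finite) tensor3 \<Rightarrow> 'n tensor4" where
  "Btensor A = (\<lambda>i1 i2 i3 i4. \<Sum>i\<in>UNIV. A i i1 i2 * A i i3 i4)"

definition S_tensor :: "('n::finite) tensor3 \<Rightarrow> 'n tensor4" where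
  "S_tensor A = (\<lambda>i1 i2 i3 i4.
      (Btensor A i1 i2 i3 i4 + Btensor A i1 i3 i2 i4 + Btensor A i1 i4 i2 i3) / 3)"

definition is_Z_eigenvalue :: "('n::finite) tensor4 \<Rightarrow> real \<Rightarrow> bool" where
  "is_Z_eigenvalue T lam \<longleftrightarrow> (\<exists>x::real^'n. x \<bullet> x = 1 \<and>
     (\<forall>i. (\<Sum>i2\<in>UNIV. \<Sum>i3\<in>UNIV. \<Sum>i4\<in>UNIV. T i i2 i3 i4 * x$i2 * x$i3 * x$i4) = lam * x$i))"

definition lambda_Zmax :: "('n::finite) tensor4 \<Rightarrow> real" where
  "lambda_Zmax T = (GREATEST lam. is_Z_eigenvalue T lam)"

definition lambda_Zmin :: "('n::finite) tensor4 \<Rightarrow> real" where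
  "lambda_Zmin T = (LEAST lam. is_Z_eigenvalue T lam)"

end

(*
  Two identities drive the proof. First, S_A y^4 = |A y y|^2, and by Cauchy-Schwarz
  lambda_Cmax A = max |A y y| over unit y, so lambda_Cmax(A)^2 is the maximum of S_A y^4 on
  the unit sphere. Second, for a symmetric fourth-order tensor D every Z-eigenvalue is a value
  D x^4 and the extrema of D x^4 on the sphere are Z-eigenvalues (Lagrange multipliers), so
  lambda_Zmax D and lambda_Zmin D are the extrema of D x^4. With A' = A + E and
  D = S_A' - S_A (symmetric since A and A' are piezoelectric-type), evaluating S_A' = S_A + D
  at maximisers of S_A and S_A' squeezes lambda_Cmax(A')^2 between lambda_Cmax(A)^2 + lambda_Zmin D
  and lambda_Cmax(A)^2 + lambda_Zmax D.
*)
theory Submission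
  imports Defs
begin

definition tensor4_form ::
    "('n::finite) tensor4 \<Rightarrow> real^'n \<Rightarrow> real^'n \<Rightarrow> real^'n \<Rightarrow> real^'n \<Rightarrow> real" where
  "tensor4_form T u v w z =
     (\<Sum>a\<in>UNIV. \<Sum>b\<in>UNIV. \<Sum>c\<in>UNIV. \<Sum>d\<in>UNIV. T a b c d * u$a * v$b * w$c * z$d)"

definition quartic_form :: "('n::finite) tensor4 \<Rightarrow> real^'n \<Rightarrow> real" where
  "quartic_form T x = tensor4_form T x x x x"

definition tensor4_apply3 :: "('n::finite) tensor4 \<Rightarrow> real^'n \<Rightarrow> real^'n" where
  "tensor4_apply3 T x = (\<chi> i. \<Sum>b\<in>UNIV. \<Sum>c\<in>UNIV. \<Sum>d\<in>UNIV. T i b c d * x$b * x$c * x$d)"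

text \<open>Invariance under the adjacent transpositions, which generate all index permutations.\<close>
definition symmetric4 :: "('n::finite) tensor4 \<Rightarrow> bool" where
  "symmetric4 T \<longleftrightarrow>
     (\<forall>a b c d. T a b c d = T b a c d \<and> T a b c d = T a c b d \<and> T a b c d = T a b d c)"

lemma tensor4_form_swap12: "tensor4_form (\<lambda>a b c d. T b a c d) u v w z = tensor4_form T v u w z"
  unfolding tensor4_form_def by (subst sum.swap) (simp add: mult_ac)

lemma tensor4_form_swap23: "tensor4_form (\<lambda>a b c d. T a c b d) u v w z = tensor4_form T u w v z"
  unfolding tensor4_form_def by (subst (2) sum.swap) (simp add: mult_ac)

lemma tensor4_form_swap34: "tensor4_form (\<lambda>a b c d. T a b d c) u v w z = tensor4_form T u v z w"
  unfolding tensor4_form_def by (subst (3) sum.swap) (simp add: mult_ac)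

lemma symmetric4_tensor4_form_commute:
  assumes "symmetric4 T"
  shows "tensor4_form T u v w z = tensor4_form T v u w z"
    and "tensor4_form T u v w z = tensor4_form T u w v z"
    and "tensor4_form T u v w z = tensor4_form T u v z w"
proof -
  have "(\<lambda>a b c d. T b a c d) = T" "(\<lambda>a b c d. T a c b d) = T" "(\<lambda>a b c d. T a b d c) = T"
    using assms unfolding symmetric4_def by (intro ext, blast)+
  then show "tensor4_form T u v w z = tensor4_form T v u w z"
    and "tensor4_form T u v w z = tensor4_form T u w v z"
    and "tensor4_form T u v w z = tensor4_form T u v z w"
    using tensor4_form_swap12[of T] tensor4_form_swap23[of T] tensor4_form_swap34[of T] by simp_all
qed

lemma tensor4_form_eq_inner_apply3: "tensor4_form T e x x x = e \<bullet> tensor4_apply3 T x"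
  unfolding tensor4_form_def tensor4_apply3_def inner_vec_def
  by (simp add: sum_distrib_left mult_ac)

lemma quartic_form_eq_inner_apply3: "quartic_form T x = x \<bullet> tensor4_apply3 T x"
  unfolding quartic_form_def by (rule tensor4_form_eq_inner_apply3)

lemma quartic_form_scaleR: "quartic_form T (c *\<^sub>R x) = c ^ 4 * quartic_form T x"
  unfolding quartic_form_def tensor4_form_def
  by (simp add: sum_distrib_left power4_eq_xxxx mult_ac)

lemma quartic_form_diff: "quartic_form (tsub4 S T) x = quartic_form S x - quartic_form T x"
  unfolding quartic_form_def tensor4_form_def tsub4_def
  by (simp add: sum_subtractf left_diff_distrib)

lemma quartic_form_average3:
  "quartic_form (\<lambda>a b c d. (T1 a b c d + T2 a b c d + T3 a b c d) / 3) x
     = (quartic_form T1 x + quartic_form T2 x + quartic_form T3 x) / 3"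
  unfolding quartic_form_def tensor4_form_def
  by (simp add: sum.distrib sum_divide_distrib add_divide_distrib ring_distribs)

lemma continuous_on_quartic_form: "continuous_on S (quartic_form T)"
  unfolding quartic_form_def tensor4_form_def by (intro continuous_intros)

lemma is_Z_eigenvalue_iff:
  "is_Z_eigenvalue T lam \<longleftrightarrow> (\<exists>x. x \<bullet> x = 1 \<and> tensor4_apply3 T x = lam *\<^sub>R x)"
  unfolding is_Z_eigenvalue_def tensor4_apply3_def by (simp add: vec_eq_iff)

lemma Z_eigenvalue_eq_quartic_form:
  assumes "is_Z_eigenvalue T lam"
  obtains x where "x \<bullet> x = 1" "lam = quartic_form T x"
proof -
  obtain x where "x \<bullet> x = 1" "tensor4_apply3 T x = lam *\<^sub>R x"
    using assms is_Z_eigenvalue_iff by blast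
  with that show ?thesis
    by (simp add: quartic_form_eq_inner_apply3)
qed

lemma quartic_form_le_if_le_on_sphere:
  assumes "\<And>y. y \<bullet> y = 1 \<Longrightarrow> quartic_form T y \<le> M"
  shows "quartic_form T x \<le> M * (x \<bullet> x)\<^sup>2"
proof (cases "x = 0")
  case True
  then show ?thesis
    using quartic_form_scaleR[of T 0 0] by simp
next
  case False
  define u where "u = (1 / norm x) *\<^sub>R x"
  have "norm u = 1"
    using False by (simp add: u_def)
  then have "u \<bullet> u = 1"
    by (simp add: norm_eq_1)
  moreover have "x = norm x *\<^sub>R u"
    using False by (simp add: u_def)
  ultimately have "quartic_form T x = norm x ^ 4 * quartic_form T u"
    by (metis quartic_form_scaleR)
  also have "\<dots> \<le> norm x ^ 4 * M"
    using assms \<open>u \<bullet> u = 1\<close> by (simp add: mult_left_mono)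
  also have "\<dots> = M * (x \<bullet> x)\<^sup>2"
    by (simp add: dot_square_norm mult.commute flip: power_mult)
  finally show ?thesis .
qed

lemma quartic_form_line_has_derivative:
  assumes "symmetric4 T"
  shows "((\<lambda>t. quartic_form T (x + t *\<^sub>R e)) has_real_derivative
           4 * (e \<bullet> tensor4_apply3 T x)) (at 0)"
proof -
  have deriv: "((\<lambda>t. quartic_form T (x + t *\<^sub>R e)) has_real_derivative
      tensor4_form T e x x x + tensor4_form T x e x x + tensor4_form T x x e x
        + tensor4_form T x x x e) (at 0)"
    unfolding quartic_form_def tensor4_form_def
    by (rule derivative_eq_intros refl | simp)+ (simp add: algebra_simps sum.distrib)
  note commute = symmetric4_tensor4_form_commute[OF assms]
  have "tensor4_form T x e x x = tensor4_form T e x x x"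
    "tensor4_form T x x e x = tensor4_form T e x x x"
    "tensor4_form T x x x e = tensor4_form T e x x x"
    using commute(1)[of x e x x] commute(2)[of x x e x] commute(3)[of x x x e] by simp_all
  with deriv show ?thesis
    by (simp add: tensor4_form_eq_inner_apply3)
qed

lemma inner_line_sq_has_derivative:
  "((\<lambda>t. ((x + t *\<^sub>R e) \<bullet> (x + t *\<^sub>R e))\<^sup>2) has_real_derivative 4 * (x \<bullet> x) * (e \<bullet> x)) (at 0)"
proof -
  have "(x + t *\<^sub>R e) \<bullet> (x + t *\<^sub>R e) = x \<bullet> x + 2 * t * (e \<bullet> x) + t\<^sup>2 * (e \<bullet> e)" for t
    by (simp add: algebra_simps inner_commute power2_eq_square)
  then show ?thesis
    by (simp only:) (rule derivative_eq_intros refl | simp)+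
qed

text \<open>Lagrange multipliers: at a maximiser \<open>x\<close> of \<open>T x\<^sup>4\<close> on the sphere, \<open>t = 0\<close> maximises
  \<open>T (x + t e)\<^sup>4 - M \<parallel>x + t e\<parallel>\<^sup>4\<close> for every direction \<open>e\<close>, so the gradient \<open>4 (T x\<^sup>3 - M x)\<close> vanishes.\<close>
lemma is_Z_eigenvalue_if_max_on_sphere:
  assumes sym: "symmetric4 T" and x: "x \<bullet> x = 1"
    and max: "\<And>y. y \<bullet> y = 1 \<Longrightarrow> quartic_form T y \<le> quartic_form T x"
  shows "is_Z_eigenvalue T (quartic_form T x)"
proof -
  define M where "M = quartic_form T x"
  define e where "e = tensor4_apply3 T x - M *\<^sub>R x"
  define h where "h t = quartic_form T (x + t *\<^sub>R e) - M * ((x + t *\<^sub>R e) \<bullet> (x + t *\<^sub>R e))\<^sup>2" for t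
  have deriv: "(h has_real_derivative
      4 * (e \<bullet> tensor4_apply3 T x) - M * (4 * (x \<bullet> x) * (e \<bullet> x))) (at 0)"
    unfolding h_def
    by (intro DERIV_diff DERIV_cmult quartic_form_line_has_derivative sym inner_line_sq_has_derivative)
  have "h t \<le> h 0" for t
    using quartic_form_le_if_le_on_sphere[of T M, OF max[folded M_def]] x
    by (simp add: h_def M_def)
  then have "4 * (e \<bullet> tensor4_apply3 T x) - M * (4 * (x \<bullet> x) * (e \<bullet> x)) = 0"
    by (intro DERIV_local_max[OF deriv, of 1]) auto
  then have "e \<bullet> e = 0"
    using x by (simp add: e_def algebra_simps)
  then show ?thesis
    using x by (auto simp: is_Z_eigenvalue_iff e_def M_def)
qed

lemma symmetric4_uminus: "symmetric4 T \<Longrightarrow> symmetric4 (\<lambda>a b c d. - T a b c d)"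
  unfolding symmetric4_def by metis

lemma quartic_form_uminus: "quartic_form (\<lambda>a b c d. - T a b c d) x = - quartic_form T x"
  unfolding quartic_form_def tensor4_form_def by (simp add: sum_negf)

lemma is_Z_eigenvalue_uminus:
  "is_Z_eigenvalue (\<lambda>a b c d. - T a b c d) (- lam) \<longleftrightarrow> is_Z_eigenvalue T lam"
  unfolding is_Z_eigenvalue_def by (simp add: sum_negf)

lemma unit_sphere_attains_max:
  fixes f :: "'a::euclidean_space \<Rightarrow> real"
  assumes "continuous_on UNIV f"
  obtains x where "x \<bullet> x = 1" "\<And>y. y \<bullet> y = 1 \<Longrightarrow> f y \<le> f x"
proof -
  have "sphere (0::'a) 1 = {y. y \<bullet> y = 1}"
    by (auto simp: norm_eq_1)
  then show ?thesis
    using continuous_attains_sup[OF compact_sphere _ continuous_on_subset[OF assms], of 0 1]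
      that by force
qed

lemma unit_sphere_attains_min:
  fixes f :: "'a::euclidean_space \<Rightarrow> real"
  assumes "continuous_on UNIV f"
  obtains x where "x \<bullet> x = 1" "\<And>y. y \<bullet> y = 1 \<Longrightarrow> f x \<le> f y"
proof -
  have "continuous_on UNIV (\<lambda>y. - f y)"
    using assms by (intro continuous_intros)
  then show ?thesis
    using unit_sphere_attains_max that by (metis neg_le_iff_le)
qed

lemma lambda_Zmax_is_max_on_sphere:
  assumes "symmetric4 T"
  obtains x where "x \<bullet> x = 1" "lambda_Zmax T = quartic_form T x"
    "\<And>y. y \<bullet> y = 1 \<Longrightarrow> quartic_form T y \<le> lambda_Zmax T"
proof -
  obtain x where x: "x \<bullet> x = 1" and max: "\<And>y. y \<bullet> y = 1 \<Longrightarrow> quartic_form T y \<le> quartic_form T x"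
    using unit_sphere_attains_max[OF continuous_on_quartic_form] by blast
  have "lambda_Zmax T = quartic_form T x"
    unfolding lambda_Zmax_def
  proof (rule Greatest_equality)
    show "is_Z_eigenvalue T (quartic_form T x)"
      using is_Z_eigenvalue_if_max_on_sphere[OF assms x max] .
  next
    fix lam
    assume "is_Z_eigenvalue T lam"
    then show "lam \<le> quartic_form T x"
      by (metis Z_eigenvalue_eq_quartic_form max)
  qed
  with that x max show ?thesis
    by simp
qed

lemma lambda_Zmin_is_min_on_sphere:
  assumes "symmetric4 T"
  obtains x where "x \<bullet> x = 1" "lambda_Zmin T = quartic_form T x"
    "\<And>y. y \<bullet> y = 1 \<Longrightarrow> lambda_Zmin T \<le> quartic_form T y"
proof -
  obtain x where x: "x \<bullet> x = 1" and min: "\<And>y. y \<bullet> y = 1 \<Longrightarrow> quartic_form T x \<le> quartic_form T y"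
    using unit_sphere_attains_min[OF continuous_on_quartic_form] by blast
  have "lambda_Zmin T = quartic_form T x"
    unfolding lambda_Zmin_def
  proof (rule Least_equality)
    show "is_Z_eigenvalue T (quartic_form T x)"
      using is_Z_eigenvalue_if_max_on_sphere[OF symmetric4_uminus[OF assms] x] min
      by (simp add: quartic_form_uminus is_Z_eigenvalue_uminus)
  next
    fix lam
    assume "is_Z_eigenvalue T lam"
    then show "quartic_form T x \<le> lam"
      by (metis Z_eigenvalue_eq_quartic_form min)
  qed
  with that x min show ?thesis
    by simp
qed

lemma symmetric4_tsub4: "symmetric4 S \<Longrightarrow> symmetric4 T \<Longrightarrow> symmetric4 (tsub4 S T)"
  unfolding symmetric4_def tsub4_def by metis

lemma symmetric4_S_tensor:
  assumes "piezo_type A"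
  shows "symmetric4 (S_tensor A)"
proof -
  let ?B = "Btensor A"
  have B12: "?B p q r s = ?B q p r s" and B34: "?B p q r s = ?B p q s r" for p q r s
    using assms unfolding Btensor_def piezo_type_def by metis+
  have B_pairs: "?B p q r s = ?B r s p q" for p q r s
    unfolding Btensor_def by (simp add: mult.commute)
  show ?thesis
    unfolding symmetric4_def S_tensor_def
  proof (intro allI conjI)
    fix a b c d
    have "?B b c a d = ?B a d b c" "?B b d a c = ?B a c b d"
      by (rule B_pairs)+
    then show "(?B a b c d + ?B a c b d + ?B a d b c) / 3 = (?B b a c d + ?B b c a d + ?B b d a c) / 3"
      using B12 by simp
    show "(?B a b c d + ?B a c b d + ?B a d b c) / 3 = (?B a c b d + ?B a b c d + ?B a d c b) / 3"
      using B34[of a d c b] by simp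
    show "(?B a b c d + ?B a c b d + ?B a d b c) / 3 = (?B a b d c + ?B a d b c + ?B a c b d) / 3"
      using B34[of a b d c] by simp
  qed
qed

definition contract23 :: "('n::finite) tensor3 \<Rightarrow> real^'n \<Rightarrow> real^'n" where
  "contract23 A y = (\<chi> i. \<Sum>j\<in>UNIV. \<Sum>k\<in>UNIV. A i j k * y$j * y$k)"

lemma form3_eq_inner_contract23: "form3 A x y = x \<bullet> contract23 A y"
  unfolding form3_def contract23_def inner_vec_def by (simp add: sum_distrib_left mult_ac)

lemma quartic_form_Btensor: "quartic_form (Btensor A) y = contract23 A y \<bullet> contract23 A y"
proof -
  have "quartic_form (Btensor A) y = (\<Sum>a\<in>UNIV. \<Sum>b\<in>UNIV. \<Sum>c\<in>UNIV. \<Sum>d\<in>UNIV. \<Sum>i\<in>UNIV.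
      (A i a b * y$a * y$b) * (A i c d * y$c * y$d))"
    unfolding quartic_form_def tensor4_form_def Btensor_def
    by (simp add: sum_distrib_left sum_distrib_right mult_ac)
  also have "\<dots> = (\<Sum>i\<in>UNIV. \<Sum>a\<in>UNIV. \<Sum>b\<in>UNIV. \<Sum>c\<in>UNIV. \<Sum>d\<in>UNIV.
      (A i a b * y$a * y$b) * (A i c d * y$c * y$d))"
    by (subst (4) sum.swap, subst (3) sum.swap, subst (2) sum.swap, subst sum.swap) (rule refl)
  also have "\<dots> = contract23 A y \<bullet> contract23 A y"
    unfolding contract23_def inner_vec_def
    by (simp only: vec_lambda_beta inner_real_def sum_distrib_right) (simp only: sum_distrib_left mult_ac)
  finally show ?thesis .
qed

lemma quartic_form_S_tensor: "quartic_form (S_tensor A) y = (norm (contract23 A y))\<^sup>2"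
proof -
  let ?B = "Btensor A"
  have "quartic_form (S_tensor A) y = (quartic_form ?B y + quartic_form (\<lambda>a b c d. ?B a c b d) y
      + quartic_form (\<lambda>a b c d. ?B a d b c) y) / 3"
    unfolding S_tensor_def by (rule quartic_form_average3)
  also have "\<dots> = quartic_form ?B y"
    using tensor4_form_swap23[of ?B y y y y]
      tensor4_form_swap34[of "\<lambda>a b c d. ?B a c b d" y y y y]
    by (simp add: quartic_form_def)
  also have "\<dots> = (norm (contract23 A y))\<^sup>2"
    by (simp add: quartic_form_Btensor power2_norm_eq_inner)
  finally show ?thesis .
qed

lemma exists_unit_inner_eq_norm:
  fixes v :: "'a::euclidean_space"
  obtains x where "x \<bullet> x = 1" "x \<bullet> v = norm v"
proof (cases "v = 0")
  case True
  obtain x :: 'a where "norm x = 1"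
    using vector_choose_size zero_le_one by blast
  with True that show ?thesis
    by (simp add: norm_eq_1)
next
  case False
  then show ?thesis
    using that[of "sgn v"] by (simp add: sgn_div_norm norm_eq_1 [symmetric] dot_square_norm power2_eq_square)
qed

lemma lambda_Cmax_is_max_on_sphere:
  obtains y where "y \<bullet> y = 1" "lambda_Cmax A = norm (contract23 A y)"
    "\<And>z. z \<bullet> z = 1 \<Longrightarrow> norm (contract23 A z) \<le> lambda_Cmax A"
proof -
  have "continuous_on UNIV (\<lambda>y. norm (contract23 A y))"
    unfolding contract23_def by (intro continuous_intros)
  then obtain y where y: "y \<bullet> y = 1"
    and max: "\<And>z. z \<bullet> z = 1 \<Longrightarrow> norm (contract23 A z) \<le> norm (contract23 A y)"
    using unit_sphere_attains_max by blast
  have "lambda_Cmax A = norm (contract23 A y)"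
    unfolding lambda_Cmax_def form3_eq_inner_contract23
  proof (rule Greatest_equality)
    obtain x where "x \<bullet> x = 1" "x \<bullet> contract23 A y = norm (contract23 A y)"
      using exists_unit_inner_eq_norm .
    with y show "\<exists>x z. x \<bullet> x = 1 \<and> z \<bullet> z = 1 \<and> norm (contract23 A y) = x \<bullet> contract23 A z"
      by metis
  next
    fix v
    assume "\<exists>x z. x \<bullet> x = 1 \<and> z \<bullet> z = 1 \<and> v = x \<bullet> contract23 A z"
    then obtain x z where "x \<bullet> x = 1" "z \<bullet> z = 1" "v = x \<bullet> contract23 A z"
      by blast
    then have "v \<le> norm x * norm (contract23 A z)"
      using norm_cauchy_schwarz by blast
    also have "\<dots> \<le> norm (contract23 A y)"
      using \<open>x \<bullet> x = 1\<close> \<open>z \<bullet> z = 1\<close> max by (simp add: norm_eq_1 [symmetric])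
    finally show "v \<le> norm (contract23 A y)" .
  qed
  with that y max show ?thesis
    by simp
qed

lemma lambda_Cmax_sq_is_max_on_sphere:
  obtains y where "y \<bullet> y = 1" "(lambda_Cmax A)\<^sup>2 = quartic_form (S_tensor A) y"
    "\<And>z. z \<bullet> z = 1 \<Longrightarrow> quartic_form (S_tensor A) z \<le> (lambda_Cmax A)\<^sup>2"
proof -
  obtain y where "y \<bullet> y = 1" "lambda_Cmax A = norm (contract23 A y)"
    and max: "\<And>z. z \<bullet> z = 1 \<Longrightarrow> norm (contract23 A z) \<le> lambda_Cmax A"
    using lambda_Cmax_is_max_on_sphere by blast
  with that show ?thesis
    by (simp add: quartic_form_S_tensor power_mono)
qed

lemma lambda_Cmax_nonneg: "0 \<le> lambda_Cmax A"
  by (metis lambda_Cmax_is_max_on_sphere norm_ge_zero)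

theorem theorem2p2:
  fixes A E :: "('n::finite) tensor3"
  assumes "piezo_type A" and "piezo_type (tadd3 A E)"
  shows "0 \<le> (lambda_Cmax A)\<^sup>2 + lambda_Zmin (tsub4 (S_tensor (tadd3 A E)) (S_tensor A))
    \<and> 0 \<le> (lambda_Cmax A)\<^sup>2 + lambda_Zmax (tsub4 (S_tensor (tadd3 A E)) (S_tensor A))
    \<and> sqrt ((lambda_Cmax A)\<^sup>2 + lambda_Zmin (tsub4 (S_tensor (tadd3 A E)) (S_tensor A)))
        \<le> lambda_Cmax (tadd3 A E)
    \<and> lambda_Cmax (tadd3 A E)
        \<le> sqrt ((lambda_Cmax A)\<^sup>2 + lambda_Zmax (tsub4 (S_tensor (tadd3 A E)) (S_tensor A)))"
proof -
  define A' where "A' = tadd3 A E"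
  define D where "D = tsub4 (S_tensor A') (S_tensor A)"
  have D: "symmetric4 D" "\<And>y. quartic_form D y = quartic_form (S_tensor A') y - quartic_form (S_tensor A) y"
    using assms by (simp_all add: D_def A'_def symmetric4_tsub4 symmetric4_S_tensor quartic_form_diff)
  obtain y where y: "y \<bullet> y = 1" "(lambda_Cmax A)\<^sup>2 = quartic_form (S_tensor A) y"
    and max: "\<And>z. z \<bullet> z = 1 \<Longrightarrow> quartic_form (S_tensor A) z \<le> (lambda_Cmax A)\<^sup>2"
    using lambda_Cmax_sq_is_max_on_sphere by blast
  obtain y' where y': "y' \<bullet> y' = 1" "(lambda_Cmax A')\<^sup>2 = quartic_form (S_tensor A') y'"
    and max': "\<And>z. z \<bullet> z = 1 \<Longrightarrow> quartic_form (S_tensor A') z \<le> (lambda_Cmax A')\<^sup>2"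
    using lambda_Cmax_sq_is_max_on_sphere by blast
  obtain x where x: "x \<bullet> x = 1" "lambda_Zmin D = quartic_form D x"
    and Zmin: "\<And>z. z \<bullet> z = 1 \<Longrightarrow> lambda_Zmin D \<le> quartic_form D z"
    using lambda_Zmin_is_min_on_sphere[OF D(1)] by blast
  obtain Zmax: "\<And>z. z \<bullet> z = 1 \<Longrightarrow> quartic_form D z \<le> lambda_Zmax D"
    using lambda_Zmax_is_max_on_sphere[OF D(1)] by blast
  have "0 \<le> (lambda_Cmax A)\<^sup>2 + lambda_Zmin D"
    using x max[of x] D(2)[of x] quartic_form_S_tensor[of A' x]
      zero_le_power2[of "norm (contract23 A' x)"] by linarith
  moreover have "(lambda_Cmax A)\<^sup>2 + lambda_Zmin D \<le> (lambda_Cmax A')\<^sup>2"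
    using y Zmin[of y] max'[of y] D(2)[of y] by simp
  moreover have "(lambda_Cmax A')\<^sup>2 \<le> (lambda_Cmax A)\<^sup>2 + lambda_Zmax D"
    using y' Zmax[of y'] max[of y'] D(2)[of y'] by simp
  ultimately show ?thesis
    unfolding A'_def [symmetric] D_def [symmetric]
    using lambda_Cmax_nonneg[of A'] by (auto intro: real_le_lsqrt real_le_rsqrt)
qed

end
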